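(* Let $M^2$ be a minimal surface of general type in $\mathbb R^4$, parameterized by semi-canonical parameters $(u,v)$, and suppose $\gamma_1=0$ identically. Then $E=E(u)$ depends only on $u$; the invariants $\mu=\mu(u)$, $\nu=\nu(u)$, $\gamma_2=\gamma_2(u)$, $\beta_2=\beta_2(u)$ depend only on $u$; $\beta_1=0$; and $$\gamma_2=\frac{1}{4\sqrt E}\big(\ln|\mu^2-\nu^2|\big)_u,\qquad \beta_2=\frac{1}{\sqrt E}\Big(\ln\sqrt{\Big|\frac{\mu+\nu}{\mu-\nu}\Big|}\Big)_u .$$
   Context: $\mathbb R^4$ carries the standard metric $g=\langle\cdot,\cdot\rangle$ and flat connection $\nabla'$; everything is smooth and local. For a regular surface $M^2: z=z(u,v)$ let $E,F,G$ be the first fundamental form coefficients, $\sigma$ the second fundamental form, $K$ the Gauss curvature, and $\varkappa$ the curvature of the normal connection, $\varkappa=g(R^\perp(x,y)n_2,n_1)$ for a positively oriented orthonormal frame $(x,y,n_1,n_2)$ with $x,y$ tangent. Minimal means $\sigma(x,x)+\sigma(y,y)=0$ for orthonormal tangent $x,y$. A minimal surface is of general type if $K^2-\varkappa^2>0$ and $\varkappa\neq0$ everywhere. The ellipse of curvature at $p$ is $\{\sigma(v,v): v\in T_pM^2,\ |v|=1\}$; a tangent line is canonical if it is collinear with an axis of this ellipse. The geometric frame is a positively oriented orthonormal frame $\{x,y,n_1,n_2\}$ with $x,y$ canonical tangent fields and $n_1,n_2$ normal, satisfying $\nabla'_xx=\gamma_1y+\nu n_1$, $\nabla'_xy=-\gamma_1x+\mu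 n_2$, $\nabla'_yx=-\gamma_2y+\mu n_2$, $\nabla'_yy=\gamma_2x-\nu n_1$, $\nabla'_xn_1=-\nu x+\beta_1n_2$, $\nabla'_yn_1=\nu y+\beta_2n_2$, $\nabla'_xn_2=-\mu y-\beta_1n_1$, $\nabla'_yn_2=-\mu x-\beta_2n_1$, with $\mu>0$, $\nu\ne0$, $\mu^2\ne\nu^2$; the functions $\nu,\mu,\gamma_1,\gamma_2,\beta_1,\beta_2$ are the invariants of $M^2$. Parameters $(u,v)$ are semi-canonical if the parametric lines are integral curves of the canonical tangents, with $F=0$, $x=z_u/\sqrt E$, $y=z_v/\sqrt G$; then $\gamma_1=-y(\ln\sqrt E)$, $\gamma_2=-x(\ln\sqrt G)$. *)

theory Defs
  imports "HOL-Analysis.Analysis"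
begin

definition pu :: "(real \<times> real \<Rightarrow> 'a::real_normed_vector) \<Rightarrow> real \<times> real \<Rightarrow> 'a" where
  "pu f p = vector_derivative (\<lambda>t. f (t, snd p)) (at (fst p))"

definition pv :: "(real \<times> real \<Rightarrow> 'a::real_normed_vector) \<Rightarrow> real \<times> real \<Rightarrow> 'a" where
  "pv f p = vector_derivative (\<lambda>t. f (fst p, t)) (at (snd p))"

fun Ck_on :: "nat \<Rightarrow> (real \<times> real) set \<Rightarrow> (real \<times> real \<Rightarrow> 'a::real_normed_vector) \<Rightarrow> bool" where
  "Ck_on 0 U f = continuous_on U f"
| "Ck_on (Suc k) U f = (f differentiable_on U \<and> Ck_on k U (pu f) \<and> Ck_on k U (pv f))"

definition smooth_on2 :: "(real \<times> real) set \<Rightarrow> (real \<times> real \<Rightarrow> 'a::real_normed_vector) \<Rightarrow> bool" where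
  "smooth_on2 U f = (\<forall>k. Ck_on k U f)"

definition fE :: "(real \<times> real \<Rightarrow> real^4) \<Rightarrow> real \<times> real \<Rightarrow> real" where
  "fE z p = pu z p \<bullet> pu z p"
definition fF :: "(real \<times> real \<Rightarrow> real^4) \<Rightarrow> real \<times> real \<Rightarrow> real" where
  "fF z p = pu z p \<bullet> pv z p"
definition fG :: "(real \<times> real \<Rightarrow> real^4) \<Rightarrow> real \<times> real \<Rightarrow> real" where
  "fG z p = pv z p \<bullet> pv z p"

text \<open>Flat connection of R^4 along the fields x = z_u/sqrt E and y = z_v/sqrt G:
  nabla'_x X = (1/sqrt E) X_u,  nabla'_y X = (1/sqrt G) X_v.\<close>

definition Dx :: "(real \<times> real \<Rightarrow> real^4) \<Rightarrow> (real \<times> real \<Rightarrow> real^4) \<Rightarrow> real \<times> real \<Rightarrow> real^4" where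
  "Dx z X p = (1 / sqrt (fE z p)) *\<^sub>R pu X p"
definition Dy :: "(real \<times> real \<Rightarrow> real^4) \<Rightarrow> (real \<times> real \<Rightarrow> real^4) \<Rightarrow> real \<times> real \<Rightarrow> real^4" where
  "Dy z X p = (1 / sqrt (fG z p)) *\<^sub>R pv X p"

text \<open>Orthogonal projections onto the tangent plane span(x,y) and the normal plane span(n1,n2)
  (x,y,n1,n2 orthonormal).\<close>

definition proj2 :: "real^4 \<Rightarrow> real^4 \<Rightarrow> real^4 \<Rightarrow> real^4" where
  "proj2 a b w = (w \<bullet> a) *\<^sub>R a + (w \<bullet> b) *\<^sub>R b"

definition geometric_frame ::
  "(real \<times> real) set \<Rightarrow> (real \<times> real \<Rightarrow> real^4) \<Rightarrow> (real \<times> real \<Rightarrow> real^4) \<Rightarrow> (real \<times> real \<Rightarrow> real^4)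
   \<Rightarrow> (real \<times> real \<Rightarrow> real) \<Rightarrow> (real \<times> real \<Rightarrow> real) \<Rightarrow> (real \<times> real \<Rightarrow> real) \<Rightarrow> (real \<times> real \<Rightarrow> real)
   \<Rightarrow> (real \<times> real \<Rightarrow> real) \<Rightarrow> (real \<times> real \<Rightarrow> real) \<Rightarrow> bool" where
  "geometric_frame U z n1 n2 \<nu> \<mu> \<gamma>1 \<gamma>2 \<beta>1 \<beta>2 \<longleftrightarrow>
    (let x = (\<lambda>p. (1 / sqrt (fE z p)) *\<^sub>R pu z p);
         y = (\<lambda>p. (1 / sqrt (fG z p)) *\<^sub>R pv z p)
     in smooth_on2 U n1 \<and> smooth_on2 U n2 \<and>
        smooth_on2 U \<nu> \<and> smooth_on2 U \<mu> \<and> smooth_on2 U \<gamma>1 \<and> smooth_on2 U \<gamma>2 \<and>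
        smooth_on2 U \<beta>1 \<and> smooth_on2 U \<beta>2 \<and>
        (\<forall>p\<in>U.
          x p \<bullet> x p = 1 \<and> y p \<bullet> y p = 1 \<and> n1 p \<bullet> n1 p = 1 \<and> n2 p \<bullet> n2 p = 1 \<and>
          x p \<bullet> y p = 0 \<and> x p \<bullet> n1 p = 0 \<and> x p \<bullet> n2 p = 0 \<and>
          y p \<bullet> n1 p = 0 \<and> y p \<bullet> n2 p = 0 \<and> n1 p \<bullet> n2 p = 0 \<and>
          det (vector [x p, y p, n1 p, n2 p] :: real^4^4) > 0 \<and>
          Dx z x p = \<gamma>1 p *\<^sub>R y p + \<nu> p *\<^sub>R n1 p \<and>
          Dx z y p = - \<gamma>1 p *\<^sub>R x p + \<mu> p *\<^sub>R n2 p \<and>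
          Dy z x p = - \<gamma>2 p *\<^sub>R y p + \<mu> p *\<^sub>R n2 p \<and>
          Dy z y p = \<gamma>2 p *\<^sub>R x p - \<nu> p *\<^sub>R n1 p \<and>
          Dx z n1 p = - \<nu> p *\<^sub>R x p + \<beta>1 p *\<^sub>R n2 p \<and>
          Dy z n1 p = \<nu> p *\<^sub>R y p + \<beta>2 p *\<^sub>R n2 p \<and>
          Dx z n2 p = - \<mu> p *\<^sub>R y p - \<beta>1 p *\<^sub>R n1 p \<and>
          Dy z n2 p = - \<mu> p *\<^sub>R x p - \<beta>2 p *\<^sub>R n1 p \<and>
          \<mu> p > 0 \<and> \<nu> p \<noteq> 0 \<and> (\<mu> p)\<^sup>2 \<noteq> (\<nu> p)\<^sup>2))"

text \<open>Second fundamental form, Gauss curvature and normal curvature, computed in the frame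
  {x,y,n1,n2}: sigma(X,Y) = normal part of nabla'_X Y; the Levi-Civita connection is the tangent
  part of nabla'; the normal connection is the normal part of nabla' applied to normal fields;
  [x,y] = nabla'_x y - nabla'_y x is expanded in the basis x,y.\<close>

definition minimal_general_type ::
  "(real \<times> real) set \<Rightarrow> (real \<times> real \<Rightarrow> real^4) \<Rightarrow> (real \<times> real \<Rightarrow> real^4) \<Rightarrow> (real \<times> real \<Rightarrow> real^4) \<Rightarrow> bool" where
  "minimal_general_type U z n1 n2 \<longleftrightarrow>
    (let x = (\<lambda>p. (1 / sqrt (fE z p)) *\<^sub>R pu z p);
         y = (\<lambda>p. (1 / sqrt (fG z p)) *\<^sub>R pv z p);
         T = (\<lambda>p w. proj2 (x p) (y p) w);
         N = (\<lambda>p w. proj2 (n1 p) (n2 p) w);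
         brk = (\<lambda>p. Dx z y p - Dy z x p);
         K = (\<lambda>p. (T p (Dx z (\<lambda>q. T q (Dy z y q)) p)
                   - T p (Dy z (\<lambda>q. T q (Dx z y q)) p)
                   - ((brk p \<bullet> x p) *\<^sub>R T p (Dx z y p) + (brk p \<bullet> y p) *\<^sub>R T p (Dy z y p)))
                  \<bullet> x p);
         \<kappa> = (\<lambda>p. (N p (Dx z (\<lambda>q. N q (Dy z n2 q)) p)
                   - N p (Dy z (\<lambda>q. N q (Dx z n2 q)) p)
                   - ((brk p \<bullet> x p) *\<^sub>R N p (Dx z n2 p) + (brk p \<bullet> y p) *\<^sub>R N p (Dy z n2 p)))
                  \<bullet> n1 p)
     in \<forall>p\<in>U. N p (Dx z x p) + N p (Dy z y p) = 0 \<and>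
               (K p)\<^sup>2 - (\<kappa> p)\<^sup>2 > 0 \<and> \<kappa> p \<noteq> 0)"

end

theory Submission
  imports Defs
begin

(* Write e = sqrt E, g = sqrt G, so that z_u = e x and z_v = g y. In coordinates the structure
   equations of the geometric frame say x_u = e nu n1, x_v = g (-gamma2 y + mu n2), etc. The whole
   proof consists of differentiating these relations and using the symmetry of mixed partial
   derivatives (Schwarz's theorem, proved here for the coordinate partials pu, pv of Defs):
   - z_uv = z_vu gives e_v = 0 and g_u = -e g gamma2;
   - (z_u)_uv = (z_u)_vu and (z_v)_uv = (z_v)_vu, paired with n1, n2 and z_v, give the Gauss
     equation gamma2_u = e (gamma2^2 - mu^2 - nu^2) and the four Codazzi equations for mu, nu;
   - one more differentiation of these scalar equations yields gamma2_v = 0, then beta1 = 0, then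
     mu_v = nu_v = beta2_v = 0, while the u-Codazzi equations are the two logarithmic formulas. Minimality itself is already
   encoded in the shape of the frame equations. *)

definition has_pu :: "(real \<times> real \<Rightarrow> 'a::real_normed_vector) \<Rightarrow> 'a \<Rightarrow> real \<times> real \<Rightarrow> bool" where
  "has_pu f D p \<longleftrightarrow> ((\<lambda>t. f (t, snd p)) has_vector_derivative D) (at (fst p))"

definition has_pv :: "(real \<times> real \<Rightarrow> 'a::real_normed_vector) \<Rightarrow> 'a \<Rightarrow> real \<times> real \<Rightarrow> bool" where
  "has_pv f D p \<longleftrightarrow> ((\<lambda>t. f (fst p, t)) has_vector_derivative D) (at (snd p))"

lemma has_pv_swap: "has_pv f D p \<longleftrightarrow> has_pu (f \<circ> prod.swap) D (prod.swap p)"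
  by (simp add: has_pu_def has_pv_def o_def)

lemma pu_eqI: "has_pu f D p \<Longrightarrow> pu f p = D"
  and pv_eqI: "has_pv f D p \<Longrightarrow> pv f p = D"
  unfolding has_pu_def has_pv_def pu_def pv_def by (auto intro: vector_derivative_at)

lemma has_pu_pu: "has_pu f D p \<Longrightarrow> has_pu f (pu f p) p"
  and has_pv_pv: "has_pv f D p \<Longrightarrow> has_pv f (pv f p) p"
  using pu_eqI pv_eqI by blast+

lemma differentiable_has_pu: "f differentiable (at p) \<Longrightarrow> has_pu f (pu f p) p"
  and differentiable_has_pv: "f differentiable (at p) \<Longrightarrow> has_pv f (pv f p) p"
proof -
  assume f: "f differentiable (at p)"
  have "(\<lambda>t. f (t, snd p)) differentiable (at (fst p))"
    using differentiable_chain_at[of "\<lambda>t. (t, snd p)" "fst p" f] f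
    by (simp add: o_def differentiableI has_derivative_Pair derivative_intros)
  then show "has_pu f (pu f p) p"
    unfolding has_pu_def pu_def by (simp add: vector_derivative_works[symmetric])
  have "(\<lambda>t. f (fst p, t)) differentiable (at (snd p))"
    using differentiable_chain_at[of "\<lambda>t. (fst p, t)" "snd p" f] f
    by (simp add: o_def differentiableI has_derivative_Pair derivative_intros)
  then show "has_pv f (pv f p) p"
    unfolding has_pv_def pv_def by (simp add: vector_derivative_works[symmetric])
qed

text \<open>Partial derivatives at a point of an open set depend only on the values on that set;
  this is how identities valid on \<open>U\<close> are differentiated below.\<close>
lemma has_pu_unique_on:
  assumes "open U" "p \<in> U" "\<forall>q\<in>U. f q = g q" "has_pu f D1 p" "has_pu g D2 p"
  shows "D1 = D2"
proof -
  let ?S = "(\<lambda>t. (t, snd p)) -` U"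
  have S: "open ?S" by (rule open_vimage[OF \<open>open U\<close>]) (auto intro!: continuous_intros)
  have "fst p \<in> ?S" using \<open>p \<in> U\<close> by simp
  have "((\<lambda>t. f (t, snd p)) has_vector_derivative D2) (at (fst p))"
    by (rule has_vector_derivative_transform_within_open[OF assms(5)[unfolded has_pu_def] S \<open>fst p \<in> ?S\<close>])
       (use assms(3) in auto)
  then show ?thesis using assms(4) unfolding has_pu_def by (rule vector_derivative_unique_at[rotated])
qed

lemma has_pv_unique_on:
  assumes "open U" "p \<in> U" "\<forall>q\<in>U. f q = g q" "has_pv f D1 p" "has_pv g D2 p"
  shows "D1 = D2"
  using assms unfolding has_pv_swap
  by (intro has_pu_unique_on[of "prod.swap -` U" _ "f \<circ> prod.swap" "g \<circ> prod.swap"])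
     (auto intro: open_vimage continuous_intros)

lemma has_pu_zero_on: "open U \<Longrightarrow> p \<in> U \<Longrightarrow> \<forall>q\<in>U. f q = c \<Longrightarrow> has_pu f D p \<Longrightarrow> D = 0"
  using has_pu_unique_on[of U p f "\<lambda>_. c" D 0] by (simp add: has_pu_def)

lemma has_pu_real: "has_pu f D p \<longleftrightarrow> ((\<lambda>t. f (t, snd p)) has_real_derivative D) (at (fst p))"
  and has_pv_real: "has_pv f D p \<longleftrightarrow> ((\<lambda>t. f (fst p, t)) has_real_derivative D) (at (snd p))"
  for f :: "real \<times> real \<Rightarrow> real"
  by (simp_all add: has_pu_def has_pv_def has_real_derivative_iff_has_vector_derivative)

lemma has_pu_const: "has_pu (\<lambda>q. c) 0 p"
  and has_pv_const: "has_pv (\<lambda>q. c) 0 p"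
  by (simp_all add: has_pu_def has_pv_def)

lemma has_pu_minus: "has_pu f a p \<Longrightarrow> has_pu (\<lambda>q. - f q) (- a) p"
  by (simp add: has_pu_def has_vector_derivative_minus)

lemma has_pu_add: "has_pu f a p \<Longrightarrow> has_pu g b p \<Longrightarrow> has_pu (\<lambda>q. f q + g q) (a + b) p"
  by (simp add: has_pu_def has_vector_derivative_add)

lemma has_pu_diff: "has_pu f a p \<Longrightarrow> has_pu g b p \<Longrightarrow> has_pu (\<lambda>q. f q - g q) (a - b) p"
  and has_pv_diff: "has_pv f a p \<Longrightarrow> has_pv g b p \<Longrightarrow> has_pv (\<lambda>q. f q - g q) (a - b) p"
  by (simp_all add: has_pu_def has_pv_def has_vector_derivative_diff)

lemma has_pu_inner:
    "has_pu f a p \<Longrightarrow> has_pu g b p \<Longrightarrow> has_pu (\<lambda>q. f q \<bullet> g q) (f p \<bullet> b + a \<bullet> g p) p"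
  and has_pv_inner:
    "has_pv f a p \<Longrightarrow> has_pv g b p \<Longrightarrow> has_pv (\<lambda>q. f q \<bullet> g q) (f p \<bullet> b + a \<bullet> g p) p"
  unfolding has_pu_def has_pv_def
  by (auto dest: bounded_bilinear.has_vector_derivative[OF bounded_bilinear_inner])

lemma has_pu_scaleR:
    "has_pu f a p \<Longrightarrow> has_pu g b p \<Longrightarrow> has_pu (\<lambda>q. f q *\<^sub>R g q) (f p *\<^sub>R b + a *\<^sub>R g p) p"
  and has_pv_scaleR:
    "has_pv f a p \<Longrightarrow> has_pv g b p \<Longrightarrow> has_pv (\<lambda>q. f q *\<^sub>R g q) (f p *\<^sub>R b + a *\<^sub>R g p) p"
  unfolding has_pu_def has_pv_def
  by (auto dest: bounded_bilinear.has_vector_derivative[OF bounded_bilinear_scaleR])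

lemma has_pu_mult: "has_pu f a p \<Longrightarrow> has_pu g b p \<Longrightarrow> has_pu (\<lambda>q. f q * g q) (f p * b + a * g p) p"
  and has_pv_mult: "has_pv f a p \<Longrightarrow> has_pv g b p \<Longrightarrow> has_pv (\<lambda>q. f q * g q) (f p * b + a * g p) p"
  for f g :: "real \<times> real \<Rightarrow> real"
  using has_pu_scaleR[of f a p g b] has_pv_scaleR[of f a p g b] by simp_all

lemma has_pu_power2: "has_pu f a p \<Longrightarrow> has_pu (\<lambda>q. (f q)\<^sup>2) (2 * f p * a) p"
  and has_pv_power2: "has_pv f a p \<Longrightarrow> has_pv (\<lambda>q. (f q)\<^sup>2) (2 * f p * a) p"
  for f :: "real \<times> real \<Rightarrow> real"
  using has_pu_mult[of f a p f a] has_pv_mult[of f a p f a] by (simp_all add: power2_eq_square algebra_simps)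

lemma has_pu_sqrt: "has_pu f a p \<Longrightarrow> f p > 0 \<Longrightarrow> has_pu (\<lambda>q. sqrt (f q)) (a / (2 * sqrt (f p))) p"
  and has_pv_sqrt: "has_pv f a p \<Longrightarrow> f p > 0 \<Longrightarrow> has_pv (\<lambda>q. sqrt (f q)) (a / (2 * sqrt (f p))) p"
  for f :: "real \<times> real \<Rightarrow> real"
  unfolding has_pu_real has_pv_real
  by (auto intro!: derivative_eq_intros simp: field_simps)

lemma has_pu_inverse: "has_pu f a p \<Longrightarrow> f p \<noteq> 0 \<Longrightarrow> has_pu (\<lambda>q. 1 / f q) (- a / (f p)\<^sup>2) p"
  and has_pv_inverse: "has_pv f a p \<Longrightarrow> f p \<noteq> 0 \<Longrightarrow> has_pv (\<lambda>q. 1 / f q) (- a / (f p)\<^sup>2) p"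
  for f :: "real \<times> real \<Rightarrow> real"
  unfolding has_pu_real has_pv_real
  by (auto intro!: derivative_eq_intros simp: field_simps power2_eq_square)

lemma has_pu_divide: "has_pu f a p \<Longrightarrow> has_pu g b p \<Longrightarrow> g p \<noteq> 0 \<Longrightarrow>
    has_pu (\<lambda>q. f q / g q) ((a * g p - f p * b) / (g p)\<^sup>2) p"
  for f g :: "real \<times> real \<Rightarrow> real"
  unfolding has_pu_real
  by (auto intro!: derivative_eq_intros simp: field_simps power2_eq_square)

lemma ln_abs_eq: "ln \<bar>x\<bar> = ln (x\<^sup>2) / 2" for x :: real
  by (cases "x = 0") (simp_all add: ln_realpow[of "\<bar>x\<bar>" 2, simplified])

lemma ln_sqrt_abs_eq: "ln (sqrt \<bar>x\<bar>) = ln \<bar>x\<bar> / 2" for x :: real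
  by (cases "x = 0") (simp_all add: ln_sqrt)

lemma has_pu_ln_abs: "has_pu f a p \<Longrightarrow> f p \<noteq> 0 \<Longrightarrow> has_pu (\<lambda>q. ln \<bar>f q\<bar>) (a / f p) p"
  for f :: "real \<times> real \<Rightarrow> real"
  unfolding has_pu_real ln_abs_eq
  by (auto intro!: derivative_eq_intros simp: field_simps power2_eq_square zero_less_mult_iff linorder_neq_iff)

lemma has_pu_ln_sqrt_abs:
  "has_pu f a p \<Longrightarrow> f p \<noteq> 0 \<Longrightarrow> has_pu (\<lambda>q. ln (sqrt \<bar>f q\<bar>)) (a / (2 * f p)) p"
  for f :: "real \<times> real \<Rightarrow> real"
  using has_pu_mult[OF has_pu_const[where c = "1/2"] has_pu_ln_abs, of f a p] by (simp add: ln_sqrt_abs_eq)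

text \<open>The second difference of \<open>f\<close> over a square of side \<open>h\<close> equals
  \<open>h\<^sup>2 f\<^sub>u\<^sub>v\<close> at an interior point (two applications of the mean value theorem).\<close>
lemma second_difference_mean_value:
  fixes f fu fuv :: "real \<times> real \<Rightarrow> real"
  assumes h: "h > 0"
    and deriv: "\<And>s t. a \<le> s \<Longrightarrow> s \<le> a + h \<Longrightarrow> b \<le> t \<Longrightarrow> t \<le> b + h \<Longrightarrow>
                  has_pu f (fu (s, t)) (s, t) \<and> has_pv fu (fuv (s, t)) (s, t)"
  shows "\<exists>\<xi> \<eta>. a < \<xi> \<and> \<xi> < a + h \<and> b < \<eta> \<and> \<eta> < b + h \<and>
           f (a + h, b + h) - f (a + h, b) - f (a, b + h) + f (a, b) = h * h * fuv (\<xi>, \<eta>)"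
proof -
  have "\<exists>\<xi>. a < \<xi> \<and> \<xi> < a + h \<and>
      (f (a + h, b + h) - f (a + h, b)) - (f (a, b + h) - f (a, b)) = (a + h - a) * (fu (\<xi>, b + h) - fu (\<xi>, b))"
    using h deriv by (intro MVT2) (auto simp: has_pu_real intro!: DERIV_diff)
  then obtain \<xi> where \<xi>: "a < \<xi>" "\<xi> < a + h"
    "f (a + h, b + h) - f (a + h, b) - f (a, b + h) + f (a, b) = h * (fu (\<xi>, b + h) - fu (\<xi>, b))"
    by auto
  have "\<exists>\<eta>. b < \<eta> \<and> \<eta> < b + h \<and> fu (\<xi>, b + h) - fu (\<xi>, b) = (b + h - b) * fuv (\<xi>, \<eta>)"
    using h \<xi> deriv by (intro MVT2) (auto simp: has_pv_real)
  then show ?thesis using \<xi> by auto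
qed

text \<open>Computing the same second difference via \<open>f\<^sub>v\<^sub>u\<close> and letting the square shrink,
  continuity of the mixed partials forces them to agree.\<close>
lemma mixed_partials_commute_real:
  fixes f fu fv fuv fvu :: "real \<times> real \<Rightarrow> real"
  assumes U: "open U" and p: "p \<in> U"
    and du: "\<forall>q\<in>U. has_pu f (fu q) q" and dv: "\<forall>q\<in>U. has_pv f (fv q) q"
    and duv: "\<forall>q\<in>U. has_pv fu (fuv q) q" and dvu: "\<forall>q\<in>U. has_pu fv (fvu q) q"
    and cuv: "continuous_on U fuv" and cvu: "continuous_on U fvu"
  shows "fuv p = fvu p"
proof (rule ccontr)
  assume "fuv p \<noteq> fvu p"
  define d where "d = \<bar>fuv p - fvu p\<bar>"
  have "d / 2 > 0" using \<open>fuv p \<noteq> fvu p\<close> by (simp add: d_def)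
  then obtain r1 r2 where r1: "r1 > 0" "\<forall>q\<in>U. dist q p < r1 \<longrightarrow> dist (fuv q) (fuv p) < d / 2"
    and r2: "r2 > 0" "\<forall>q\<in>U. dist q p < r2 \<longrightarrow> dist (fvu q) (fvu p) < d / 2"
    using cuv cvu p unfolding continuous_on_iff by metis
  obtain r3 where r3: "r3 > 0" "ball p r3 \<subseteq> U" using U p open_contains_ball by blast
  define r where "r = min r1 (min r2 r3)"
  define h where "h = r / 3"
  obtain a b where pab: "p = (a, b)" by fastforce
  have h: "h > 0" using r1 r2 r3 by (simp add: h_def r_def)
  have near: "(s, t) \<in> U \<and> dist (s, t) p < r" if "a \<le> s" "s \<le> a + h" "b \<le> t" "t \<le> b + h" for s t
  proof -
    have "dist (s, t) p \<le> \<bar>s - a\<bar> + \<bar>t - b\<bar>"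
      using sqrt_sum_squares_le_sum_abs[of "s - a" "t - b"] by (simp add: pab dist_Pair_Pair dist_real_def)
    also have "\<dots> < r" using that h by (simp add: h_def)
    finally show ?thesis using r3 by (auto simp: r_def dist_commute)
  qed
  have "\<exists>\<xi> \<eta>. a < \<xi> \<and> \<xi> < a + h \<and> b < \<eta> \<and> \<eta> < b + h \<and>
          f (a + h, b + h) - f (a + h, b) - f (a, b + h) + f (a, b) = h * h * fuv (\<xi>, \<eta>)"
  proof (rule second_difference_mean_value[OF h])
    fix s t assume "a \<le> s" "s \<le> a + h" "b \<le> t" "t \<le> b + h"
    then show "has_pu f (fu (s, t)) (s, t) \<and> has_pv fu (fuv (s, t)) (s, t)"
      using near du duv by blast
  qed
  then obtain \<xi> \<eta> where \<xi>\<eta>: "a < \<xi>" "\<xi> < a + h" "b < \<eta>" "\<eta> < b + h"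
    and first: "f (a + h, b + h) - f (a + h, b) - f (a, b + h) + f (a, b) = h * h * fuv (\<xi>, \<eta>)"
    by blast
  \<comment> \<open>the same second difference, computed by differentiating first in v, then in u\<close>
  have "\<exists>\<eta>' \<xi>'. b < \<eta>' \<and> \<eta>' < b + h \<and> a < \<xi>' \<and> \<xi>' < a + h \<and>
          (f \<circ> prod.swap) (b + h, a + h) - (f \<circ> prod.swap) (b + h, a) - (f \<circ> prod.swap) (b, a + h)
           + (f \<circ> prod.swap) (b, a) = h * h * (fvu \<circ> prod.swap) (\<eta>', \<xi>')"
  proof (rule second_difference_mean_value[OF h])
    fix t s assume "b \<le> t" "t \<le> b + h" "a \<le> s" "s \<le> a + h"
    then have "(s, t) \<in> U" using near by blast
    then show "has_pu (f \<circ> prod.swap) ((fv \<circ> prod.swap) (t, s)) (t, s) \<and>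
               has_pv (fv \<circ> prod.swap) ((fvu \<circ> prod.swap) (t, s)) (t, s)"
      using dv dvu by (fastforce simp: has_pu_def has_pv_def o_def)
  qed
  then obtain \<eta>' \<xi>' where \<xi>\<eta>': "b < \<eta>'" "\<eta>' < b + h" "a < \<xi>'" "\<xi>' < a + h"
    and "f (a + h, b + h) - f (a, b + h) - f (a + h, b) + f (a, b) = h * h * fvu (\<xi>', \<eta>')"
    by auto
  then have "h * h * fuv (\<xi>, \<eta>) = h * h * fvu (\<xi>', \<eta>')" using first by argo
  then have "fuv (\<xi>, \<eta>) = fvu (\<xi>', \<eta>')" using h by simp
  moreover have "dist (fuv (\<xi>, \<eta>)) (fuv p) < d / 2" using r1 near[of \<xi> \<eta>] \<xi>\<eta> by (simp add: r_def)
  moreover have "dist (fvu (\<xi>', \<eta>')) (fvu p) < d / 2" using r2 near[of \<xi>' \<eta>'] \<xi>\<eta>' by (simp add: r_def)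
  ultimately have "\<bar>fuv p - fvu p\<bar> < d" unfolding dist_real_def by linarith
  then show False by (simp add: d_def)
qed

text \<open>The vector-valued version follows componentwise (pair with a fixed vector).\<close>
lemma mixed_partials_commute:
  fixes f fu fv fuv fvu :: "real \<times> real \<Rightarrow> 'a::real_inner"
  assumes U: "open U" and p: "p \<in> U"
    and du: "\<forall>q\<in>U. has_pu f (fu q) q" and dv: "\<forall>q\<in>U. has_pv f (fv q) q"
    and duv: "\<forall>q\<in>U. has_pv fu (fuv q) q" and dvu: "\<forall>q\<in>U. has_pu fv (fvu q) q"
    and cuv: "continuous_on U fuv" and cvu: "continuous_on U fvu"
  shows "fuv p = fvu p"
proof -
  have component: "fuv p \<bullet> c = fvu p \<bullet> c" for c
    using du dv duv dvu cuv cvu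
    by (intro mixed_partials_commute_real[OF U p, of "\<lambda>q. f q \<bullet> c" "\<lambda>q. fu q \<bullet> c" "\<lambda>q. fv q \<bullet> c"])
       (auto intro: has_pu_inner[OF _ has_pu_const, simplified] has_pv_inner[OF _ has_pv_const, simplified]
             continuous_intros)
  have "(fuv p - fvu p) \<bullet> (fuv p - fvu p) = 0"
    using component[of "fuv p - fvu p"] by (simp add: inner_diff_left)
  then show ?thesis by simp
qed

lemma smooth_on2_pu: "smooth_on2 U f \<Longrightarrow> smooth_on2 U (pu f)"
  and smooth_on2_pv: "smooth_on2 U f \<Longrightarrow> smooth_on2 U (pv f)"
  and smooth_on2_continuous: "smooth_on2 U f \<Longrightarrow> continuous_on U f"
  unfolding smooth_on2_def by (metis Ck_on.simps(1,2))+

lemma smooth_on2_has_pu: "open U \<Longrightarrow> smooth_on2 U f \<Longrightarrow> p \<in> U \<Longrightarrow> has_pu f (pu f p) p"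
  and smooth_on2_has_pv: "open U \<Longrightarrow> smooth_on2 U f \<Longrightarrow> p \<in> U \<Longrightarrow> has_pv f (pv f p) p"
  unfolding smooth_on2_def
  by (metis Ck_on.simps(2) differentiable_on_eq_differentiable_at differentiable_has_pu differentiable_has_pv)+

lemma smooth_on2_mixed_partials:
  fixes f :: "real \<times> real \<Rightarrow> 'a::real_inner"
  assumes "open U" "smooth_on2 U f" "p \<in> U"
  shows "pv (pu f) p = pu (pv f) p"
  using assms
  by (intro mixed_partials_commute[where f = f and fu = "pu f" and fv = "pv f"])
     (auto intro: smooth_on2_has_pu smooth_on2_has_pv smooth_on2_pu smooth_on2_pv smooth_on2_continuous)

lemma smooth_on2_second_partials:
  fixes f :: "real \<times> real \<Rightarrow> 'a::real_inner"
  assumes "open U" "smooth_on2 U f" "p \<in> U"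
  shows "has_pv (pu f) (pv (pu f) p) p" "has_pu (pv f) (pv (pu f) p) p"
  using smooth_on2_has_pv[OF assms(1) smooth_on2_pu[OF assms(2)] assms(3)]
    smooth_on2_has_pu[OF assms(1) smooth_on2_pv[OF assms(2)] assms(3)]
  unfolding smooth_on2_mixed_partials[OF assms] .

text \<open>The general trick used for the Gauss and Codazzi equations: if \<open>w\<cdot>P = A\<close> and
  \<open>w\<cdot>Q = B\<close> on \<open>U\<close> and \<open>P\<^sub>v = Q\<^sub>u\<close>, then differentiating the first in v and the second in u
  eliminates the unknown third derivative \<open>P\<^sub>v\<close>.\<close>
lemma inner_mixed_partials:
  fixes w P Q :: "real \<times> real \<Rightarrow> 'a::real_inner" and A B :: "real \<times> real \<Rightarrow> real"
  assumes U: "open U" and q: "q \<in> U"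
    and A: "\<forall>p\<in>U. w p \<bullet> P p = A p" and B: "\<forall>p\<in>U. w p \<bullet> Q p = B p"
    and w: "has_pu w (pu w q) q" "has_pv w (pv w q) q"
    and PQ: "has_pv P R q" "has_pu Q R q"
    and AB: "has_pv A Av q" "has_pu B Bu q"
  shows "pv w q \<bullet> P q - pu w q \<bullet> Q q = Av - Bu"
proof -
  have "w q \<bullet> R + pv w q \<bullet> P q = Av"
    by (rule has_pv_unique_on[OF U q A has_pv_inner[OF w(2) PQ(1)] AB(1)])
  moreover have "w q \<bullet> R + pu w q \<bullet> Q q = Bu"
    by (rule has_pu_unique_on[OF U q B has_pu_inner[OF w(1) PQ(2)] AB(2)])
  ultimately show ?thesis by simp
qed

text \<open>The hypotheses of the main theorem, minus the unused minimality assumption.\<close>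
locale frame_gamma1_zero =
  fixes U :: "(real \<times> real) set"
    and z n1 n2 :: "real \<times> real \<Rightarrow> real^4"
    and \<nu> \<mu> \<gamma>1 \<gamma>2 \<beta>1 \<beta>2 :: "real \<times> real \<Rightarrow> real"
  assumes U: "open U"
    and z_smooth: "smooth_on2 U z"
    and regular: "\<forall>p\<in>U. fE z p * fG z p - (fF z p)\<^sup>2 > 0"
    and F_zero: "\<forall>p\<in>U. fF z p = 0"
    and frame: "geometric_frame U z n1 n2 \<nu> \<mu> \<gamma>1 \<gamma>2 \<beta>1 \<beta>2"
    and \<gamma>1_zero: "\<forall>p\<in>U. \<gamma>1 p = 0"
begin

abbreviation sE :: "real \<times> real \<Rightarrow> real" where "sE \<equiv> \<lambda>q. sqrt (fE z q)"
abbreviation sG :: "real \<times> real \<Rightarrow> real" where "sG \<equiv> \<lambda>q. sqrt (fG z q)"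
definition x :: "real \<times> real \<Rightarrow> real^4" where "x q = (1 / sE q) *\<^sub>R pu z q"
definition y :: "real \<times> real \<Rightarrow> real^4" where "y q = (1 / sG q) *\<^sub>R pv z q"

lemma frame_smooth:
  "smooth_on2 U n1" "smooth_on2 U n2" "smooth_on2 U \<nu>" "smooth_on2 U \<mu>"
  "smooth_on2 U \<gamma>2" "smooth_on2 U \<beta>2"
  using frame unfolding geometric_frame_def Let_def by auto

lemma orthonormal:
  assumes "q \<in> U"
  shows "x q \<bullet> x q = 1" "y q \<bullet> y q = 1" "n1 q \<bullet> n1 q = 1" "n2 q \<bullet> n2 q = 1"
    "x q \<bullet> y q = 0" "x q \<bullet> n1 q = 0" "x q \<bullet> n2 q = 0" "y q \<bullet> n1 q = 0" "y q \<bullet> n2 q = 0"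
    "n1 q \<bullet> n2 q = 0" "y q \<bullet> x q = 0" "n1 q \<bullet> x q = 0" "n2 q \<bullet> x q = 0" "n1 q \<bullet> y q = 0"
    "n2 q \<bullet> y q = 0" "n2 q \<bullet> n1 q = 0"
  using frame assms unfolding geometric_frame_def Let_def x_def y_def by (auto simp: inner_commute)

lemma structure_equations:
  assumes "q \<in> U"
  shows "Dx z x q = \<nu> q *\<^sub>R n1 q" "Dx z y q = \<mu> q *\<^sub>R n2 q"
    "Dy z x q = - \<gamma>2 q *\<^sub>R y q + \<mu> q *\<^sub>R n2 q" "Dy z y q = \<gamma>2 q *\<^sub>R x q - \<nu> q *\<^sub>R n1 q"
    "Dx z n1 q = - \<nu> q *\<^sub>R x q + \<beta>1 q *\<^sub>R n2 q" "Dy z n1 q = \<nu> q *\<^sub>R y q + \<beta>2 q *\<^sub>R n2 q"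
    "Dx z n2 q = - \<mu> q *\<^sub>R y q - \<beta>1 q *\<^sub>R n1 q" "Dy z n2 q = - \<mu> q *\<^sub>R x q - \<beta>2 q *\<^sub>R n1 q"
  using frame assms \<gamma>1_zero unfolding geometric_frame_def Let_def x_def[abs_def] y_def[abs_def] by auto

lemma invariants_nonzero:
  assumes "q \<in> U"
  shows "\<mu> q \<noteq> 0" "\<nu> q \<noteq> 0" "(\<mu> q)\<^sup>2 - (\<nu> q)\<^sup>2 \<noteq> 0"
  using frame assms unfolding geometric_frame_def Let_def by auto

lemma metric_positive:
  assumes "q \<in> U"
  shows "fE z q > 0" "fG z q > 0" "sE q > 0" "sG q > 0"
proof -
  have "fE z q * fG z q > 0" using regular F_zero assms by auto
  moreover have "fE z q \<ge> 0" "fG z q \<ge> 0" unfolding fE_def fG_def by simp_all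
  ultimately show "fE z q > 0" "fG z q > 0" "sE q > 0" "sG q > 0"
    by (auto simp: zero_less_mult_iff)
qed

lemma tangent_vectors:
  assumes "q \<in> U"
  shows "pu z q = sE q *\<^sub>R x q" "pv z q = sG q *\<^sub>R y q"
  using metric_positive[OF assms] by (simp_all add: x_def y_def)

lemma z_partials:
  assumes "q \<in> U"
  shows "has_pu z (pu z q) q" "has_pv z (pv z q) q"
    "has_pu (pu z) (pu (pu z) q) q" "has_pv (pu z) (pv (pu z) q) q"
    "has_pu (pv z) (pu (pv z) q) q" "has_pv (pv z) (pv (pv z) q) q"
  using smooth_on2_pu[OF z_smooth] smooth_on2_pv[OF z_smooth] z_smooth assms
  by (auto intro: smooth_on2_has_pu[OF U] smooth_on2_has_pv[OF U])

lemma metric_partials: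
  assumes q: "q \<in> U"
  shows "has_pu sE (pu sE q) q" "has_pv sE (pv sE q) q" "has_pu sG (pu sG q) q" "has_pv sG (pv sG q) q"
proof -
  have E: "fE z = (\<lambda>q. pu z q \<bullet> pu z q)" and G: "fG z = (\<lambda>q. pv z q \<bullet> pv z q)"
    by (auto simp: fE_def fG_def)
  show "has_pu sE (pu sE q) q" "has_pv sE (pv sE q) q" "has_pu sG (pu sG q) q" "has_pv sG (pv sG q) q"
    using z_partials[OF q] metric_positive[OF q] unfolding E G
    by (auto intro!: has_pu_pu has_pv_pv has_pu_sqrt has_pv_sqrt has_pu_inner has_pv_inner)
qed

lemma frame_partials:
  assumes q: "q \<in> U"
  shows "has_pu x (pu x q) q" "has_pv x (pv x q) q" "has_pu y (pu y q) q" "has_pv y (pv y q) q"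
    "has_pu n1 (pu n1 q) q" "has_pv n1 (pv n1 q) q" "has_pu n2 (pu n2 q) q" "has_pv n2 (pv n2 q) q"
proof -
  note d = z_partials[OF q] metric_partials[OF q]
  have "sE q \<noteq> 0" "sG q \<noteq> 0" using metric_positive[OF q] by simp_all
  then show "has_pu x (pu x q) q" "has_pv x (pv x q) q" "has_pu y (pu y q) q" "has_pv y (pv y q) q"
    using d unfolding x_def[abs_def] y_def[abs_def]
    by (auto intro: has_pu_pu[OF has_pu_scaleR[OF has_pu_inverse]] has_pv_pv[OF has_pv_scaleR[OF has_pv_inverse]])
  show "has_pu n1 (pu n1 q) q" "has_pv n1 (pv n1 q) q" "has_pu n2 (pu n2 q) q" "has_pv n2 (pv n2 q) q"
    using frame_smooth q by (auto intro: smooth_on2_has_pu[OF U] smooth_on2_has_pv[OF U])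
qed

text \<open>The structure equations, read in the coordinates: the flat connection along x and y is
  \<open>1/\<surd>E\<close> resp. \<open>1/\<surd>G\<close> times the partial derivative.\<close>
lemma frame_derivatives:
  assumes q: "q \<in> U"
  shows "pu x q = (sE q * \<nu> q) *\<^sub>R n1 q" "pu y q = (sE q * \<mu> q) *\<^sub>R n2 q"
    "pv x q = sG q *\<^sub>R (- \<gamma>2 q *\<^sub>R y q + \<mu> q *\<^sub>R n2 q)"
    "pv y q = sG q *\<^sub>R (\<gamma>2 q *\<^sub>R x q - \<nu> q *\<^sub>R n1 q)"
    "pu n1 q = sE q *\<^sub>R (- \<nu> q *\<^sub>R x q + \<beta>1 q *\<^sub>R n2 q)"
    "pv n1 q = sG q *\<^sub>R (\<nu> q *\<^sub>R y q + \<beta>2 q *\<^sub>R n2 q)"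
    "pu n2 q = sE q *\<^sub>R (- \<mu> q *\<^sub>R y q - \<beta>1 q *\<^sub>R n1 q)"
    "pv n2 q = sG q *\<^sub>R (- \<mu> q *\<^sub>R x q - \<beta>2 q *\<^sub>R n1 q)"
proof -
  have "pu X q = sE q *\<^sub>R Dx z X q" "pv X q = sG q *\<^sub>R Dy z X q" for X
    using metric_positive[OF q] by (simp_all add: Dx_def Dy_def)
  then show "pu x q = (sE q * \<nu> q) *\<^sub>R n1 q" "pu y q = (sE q * \<mu> q) *\<^sub>R n2 q"
    "pv x q = sG q *\<^sub>R (- \<gamma>2 q *\<^sub>R y q + \<mu> q *\<^sub>R n2 q)"
    "pv y q = sG q *\<^sub>R (\<gamma>2 q *\<^sub>R x q - \<nu> q *\<^sub>R n1 q)"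
    "pu n1 q = sE q *\<^sub>R (- \<nu> q *\<^sub>R x q + \<beta>1 q *\<^sub>R n2 q)"
    "pv n1 q = sG q *\<^sub>R (\<nu> q *\<^sub>R y q + \<beta>2 q *\<^sub>R n2 q)"
    "pu n2 q = sE q *\<^sub>R (- \<mu> q *\<^sub>R y q - \<beta>1 q *\<^sub>R n1 q)"
    "pv n2 q = sG q *\<^sub>R (- \<mu> q *\<^sub>R x q - \<beta>2 q *\<^sub>R n1 q)"
    by (simp_all add: structure_equations[OF q])
qed

text \<open>Second derivatives of z, by differentiating \<open>z\<^sub>u = \<surd>E x\<close> and \<open>z\<^sub>v = \<surd>G y\<close>.\<close>
lemma second_derivatives:
  assumes q: "q \<in> U"
  shows "pu (pu z) q = pu sE q *\<^sub>R x q + (sE q * sE q * \<nu> q) *\<^sub>R n1 q"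
    "pv (pu z) q = pv sE q *\<^sub>R x q + (sE q * sG q) *\<^sub>R (- \<gamma>2 q *\<^sub>R y q + \<mu> q *\<^sub>R n2 q)"
    "pu (pv z) q = pu sG q *\<^sub>R y q + (sG q * sE q * \<mu> q) *\<^sub>R n2 q"
    "pv (pv z) q = pv sG q *\<^sub>R y q + (sG q * sG q) *\<^sub>R (\<gamma>2 q *\<^sub>R x q - \<nu> q *\<^sub>R n1 q)"
proof -
  have zu: "\<forall>p\<in>U. pu z p = sE p *\<^sub>R x p" and zv: "\<forall>p\<in>U. pv z p = sG p *\<^sub>R y p"
    using tangent_vectors by auto
  note d = z_partials[OF q] metric_partials[OF q] frame_partials[OF q]
  have "pu (pu z) q = sE q *\<^sub>R pu x q + pu sE q *\<^sub>R x q"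
    by (rule has_pu_unique_on[OF U q zu d(3) has_pu_scaleR[OF d(7) d(11)]])
  then show "pu (pu z) q = pu sE q *\<^sub>R x q + (sE q * sE q * \<nu> q) *\<^sub>R n1 q"
    by (simp add: frame_derivatives[OF q])
  have "pv (pu z) q = sE q *\<^sub>R pv x q + pv sE q *\<^sub>R x q"
    by (rule has_pv_unique_on[OF U q zu d(4) has_pv_scaleR[OF d(8) d(12)]])
  then show "pv (pu z) q = pv sE q *\<^sub>R x q + (sE q * sG q) *\<^sub>R (- \<gamma>2 q *\<^sub>R y q + \<mu> q *\<^sub>R n2 q)"
    by (simp add: frame_derivatives[OF q])
  have "pu (pv z) q = sG q *\<^sub>R pu y q + pu sG q *\<^sub>R y q"
    by (rule has_pu_unique_on[OF U q zv d(5) has_pu_scaleR[OF d(9) d(13)]])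
  then show "pu (pv z) q = pu sG q *\<^sub>R y q + (sG q * sE q * \<mu> q) *\<^sub>R n2 q"
    by (simp add: frame_derivatives[OF q])
  have "pv (pv z) q = sG q *\<^sub>R pv y q + pv sG q *\<^sub>R y q"
    by (rule has_pv_unique_on[OF U q zv d(6) has_pv_scaleR[OF d(10) d(14)]])
  then show "pv (pv z) q = pv sG q *\<^sub>R y q + (sG q * sG q) *\<^sub>R (\<gamma>2 q *\<^sub>R x q - \<nu> q *\<^sub>R n1 q)"
    by (simp add: frame_derivatives[OF q])
qed

lemmas inner_expand = inner_add_left inner_add_right inner_diff_left inner_diff_right
  inner_scaleR_left inner_scaleR_right inner_minus_left inner_minus_right

text \<open>Symmetry \<open>z\<^sub>u\<^sub>v = z\<^sub>v\<^sub>u\<close>: its x- and y-components give the derivatives of the metric.\<close>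
lemma metric_derivatives:
  assumes q: "q \<in> U"
  shows "pv sE q = 0" "pu sG q = - sE q * sG q * \<gamma>2 q"
proof -
  have sym: "pv (pu z) q = pu (pv z) q" by (rule smooth_on2_mixed_partials[OF U z_smooth q])
  from arg_cong[OF sym, of "\<lambda>w. w \<bullet> x q"] show "pv sE q = 0"
    by (simp add: second_derivatives[OF q] inner_expand orthonormal[OF q])
  from arg_cong[OF sym, of "\<lambda>w. w \<bullet> y q"] show "pu sG q = - sE q * sG q * \<gamma>2 q"
    by (simp add: second_derivatives[OF q] inner_expand orthonormal[OF q])
qed

lemma scalar_partials:
  assumes q: "q \<in> U"
  shows "has_pu \<mu> (pu \<mu> q) q" "has_pv \<mu> (pv \<mu> q) q" "has_pu \<nu> (pu \<nu> q) q" "has_pv \<nu> (pv \<nu> q) q"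
    "has_pu \<gamma>2 (pu \<gamma>2 q) q" "has_pv \<gamma>2 (pv \<gamma>2 q) q" "has_pv \<beta>2 (pv \<beta>2 q) q"
  using frame_smooth q by (auto intro: smooth_on2_has_pu[OF U] smooth_on2_has_pv[OF U])

lemma codazzi_\<nu>v:
  assumes q: "q \<in> U"
  shows "pv \<nu> q = - sG q * \<mu> q * \<beta>1 q"
proof -
  have A: "\<forall>p\<in>U. n1 p \<bullet> pu (pu z) p = sE p * sE p * \<nu> p"
    and B: "\<forall>p\<in>U. n1 p \<bullet> pv (pu z) p = 0"
    by (simp_all add: second_derivatives inner_expand orthonormal)
  note d = metric_partials[OF q] frame_partials[OF q] scalar_partials[OF q]
  have "pv n1 q \<bullet> pu (pu z) q - pu n1 q \<bullet> pv (pu z) q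
      = sE q * sE q * pv \<nu> q + (sE q * pv sE q + pv sE q * sE q) * \<nu> q - 0"
    by (rule inner_mixed_partials[OF U q A B d(9,10) smooth_on2_second_partials[OF U smooth_on2_pu[OF z_smooth] q]
          has_pv_mult[OF has_pv_mult[OF d(2) d(2)] d(16)] has_pu_const])
  then have "sE q * sE q * pv \<nu> q = sE q * sE q * (- sG q * \<mu> q * \<beta>1 q)"
    by (simp add: second_derivatives[OF q] frame_derivatives[OF q] metric_derivatives[OF q]
        inner_expand orthonormal[OF q] algebra_simps del: real_sqrt_mult_self)
  then show ?thesis by (rule mult_left_cancel[THEN iffD1, rotated]) (use metric_positive[OF q] in simp)
qed

lemma codazzi_\<mu>v:
  assumes q: "q \<in> U"
  shows "pv \<mu> q = - sG q * \<nu> q * \<beta>1 q"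
proof -
  have A: "\<forall>p\<in>U. n2 p \<bullet> pu (pv z) p = sG p * sE p * \<mu> p"
    and B: "\<forall>p\<in>U. n2 p \<bullet> pv (pv z) p = 0"
    by (simp_all add: second_derivatives inner_expand orthonormal)
  note d = metric_partials[OF q] frame_partials[OF q] scalar_partials[OF q]
  have "pv n2 q \<bullet> pu (pv z) q - pu n2 q \<bullet> pv (pv z) q
      = sG q * sE q * pv \<mu> q + (sG q * pv sE q + pv sG q * sE q) * \<mu> q - 0"
    by (rule inner_mixed_partials[OF U q A B d(11,12) smooth_on2_second_partials[OF U smooth_on2_pv[OF z_smooth] q]
          has_pv_mult[OF has_pv_mult[OF d(4) d(2)] d(14)] has_pu_const])
  then have "sE q * sG q * pv \<mu> q = sE q * sG q * (- sG q * \<nu> q * \<beta>1 q)"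
    by (simp add: second_derivatives[OF q] frame_derivatives[OF q] metric_derivatives[OF q]
        inner_expand orthonormal[OF q] algebra_simps del: real_sqrt_mult_self)
  then show ?thesis by (rule mult_left_cancel[THEN iffD1, rotated]) (use metric_positive[OF q] in simp)
qed

lemma codazzi_\<mu>u:
  assumes q: "q \<in> U"
  shows "pu \<mu> q = 2 * sE q * \<gamma>2 q * \<mu> q + sE q * \<nu> q * \<beta>2 q"
proof -
  have A: "\<forall>p\<in>U. n2 p \<bullet> pu (pu z) p = 0"
    and B: "\<forall>p\<in>U. n2 p \<bullet> pv (pu z) p = sE p * sG p * \<mu> p"
    by (simp_all add: second_derivatives inner_expand orthonormal)
  note d = metric_partials[OF q] frame_partials[OF q] scalar_partials[OF q]
  have "pv n2 q \<bullet> pu (pu z) q - pu n2 q \<bullet> pv (pu z) q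
      = 0 - (sE q * sG q * pu \<mu> q + (sE q * pu sG q + pu sE q * sG q) * \<mu> q)"
    by (rule inner_mixed_partials[OF U q A B d(11,12) smooth_on2_second_partials[OF U smooth_on2_pu[OF z_smooth] q]
          has_pv_const has_pu_mult[OF has_pu_mult[OF d(1) d(3)] d(13)]])
  then have "sE q * sG q * pu \<mu> q = sE q * sG q * (2 * sE q * \<gamma>2 q * \<mu> q + sE q * \<nu> q * \<beta>2 q)"
    by (simp add: second_derivatives[OF q] frame_derivatives[OF q] metric_derivatives[OF q]
        inner_expand orthonormal[OF q] algebra_simps del: real_sqrt_mult_self)
  then show ?thesis by (rule mult_left_cancel[THEN iffD1, rotated]) (use metric_positive[OF q] in simp)
qed

lemma codazzi_\<nu>u:
  assumes q: "q \<in> U"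
  shows "pu \<nu> q = 2 * sE q * \<gamma>2 q * \<nu> q + sE q * \<mu> q * \<beta>2 q"
proof -
  have A: "\<forall>p\<in>U. n1 p \<bullet> pu (pv z) p = 0"
    and B: "\<forall>p\<in>U. n1 p \<bullet> pv (pv z) p = - (sG p * sG p * \<nu> p)"
    by (simp_all add: second_derivatives inner_expand orthonormal)
  note d = metric_partials[OF q] frame_partials[OF q] scalar_partials[OF q]
  have "pv n1 q \<bullet> pu (pv z) q - pu n1 q \<bullet> pv (pv z) q
      = 0 - - (sG q * sG q * pu \<nu> q + (sG q * pu sG q + pu sG q * sG q) * \<nu> q)"
    by (rule inner_mixed_partials[OF U q A B d(9,10) smooth_on2_second_partials[OF U smooth_on2_pv[OF z_smooth] q]
          has_pv_const has_pu_minus[OF has_pu_mult[OF has_pu_mult[OF d(3) d(3)] d(15)]]])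
  then have "sG q * sG q * pu \<nu> q = sG q * sG q * (2 * sE q * \<gamma>2 q * \<nu> q + sE q * \<mu> q * \<beta>2 q)"
    by (simp add: second_derivatives[OF q] frame_derivatives[OF q] metric_derivatives[OF q]
        inner_expand orthonormal[OF q] algebra_simps del: real_sqrt_mult_self)
  then show ?thesis by (rule mult_left_cancel[THEN iffD1, rotated]) (use metric_positive[OF q] in simp)
qed

lemma gauss_equation:
  assumes q: "q \<in> U"
  shows "pu \<gamma>2 q = sE q * ((\<gamma>2 q)\<^sup>2 - (\<mu> q)\<^sup>2 - (\<nu> q)\<^sup>2)"
proof -
  have A: "\<forall>p\<in>U. pv z p \<bullet> pu (pu z) p = 0"
    and B: "\<forall>p\<in>U. pv z p \<bullet> pv (pu z) p = - (sE p * sG p * sG p * \<gamma>2 p)"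
    by (simp_all add: tangent_vectors second_derivatives inner_expand orthonormal)
  note d = metric_partials[OF q] scalar_partials[OF q]
  have "pv (pv z) q \<bullet> pu (pu z) q - pu (pv z) q \<bullet> pv (pu z) q
      = 0 - - (sE q * sG q * sG q * pu \<gamma>2 q
               + (sE q * sG q * pu sG q + (sE q * pu sG q + pu sE q * sG q) * sG q) * \<gamma>2 q)"
    by (rule inner_mixed_partials[OF U q A B z_partials(5,6)[OF q] smooth_on2_second_partials[OF U smooth_on2_pu[OF z_smooth] q]
          has_pv_const has_pu_minus[OF has_pu_mult[OF has_pu_mult[OF has_pu_mult[OF d(1) d(3)] d(3)] d(9)]]])
  then have "sE q * sG q * sG q * pu \<gamma>2 q
      = sE q * sG q * sG q * (sE q * ((\<gamma>2 q)\<^sup>2 - (\<mu> q)\<^sup>2 - (\<nu> q)\<^sup>2))"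
    by (simp add: second_derivatives[OF q] frame_derivatives[OF q] metric_derivatives[OF q]
        inner_expand orthonormal[OF q] algebra_simps power2_eq_square del: real_sqrt_mult_self)
  then show ?thesis by (rule mult_left_cancel[THEN iffD1, rotated]) (use metric_positive[OF q] in simp)
qed

text \<open>Combining the Codazzi equations, \<open>\<mu>\<mu>\<^sub>u - \<nu>\<nu>\<^sub>u = 2\<surd>E \<gamma>\<^sub>2 (\<mu>\<^sup>2 - \<nu>\<^sup>2)\<close>
  and \<open>\<mu>\<mu>\<^sub>v - \<nu>\<nu>\<^sub>v = 0\<close>.
  Differentiating the first in v and the second in u, the mixed derivatives of \<mu> and \<nu> cancel,
  and what remains is \<open>2\<surd>E (\<mu>\<^sup>2 - \<nu>\<^sup>2) \<gamma>\<^sub>2\<^sub>v = 0\<close>.\<close>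
lemma \<gamma>2_v_zero:
  assumes q: "q \<in> U"
  shows "pv \<gamma>2 q = 0"
proof -
  have I: "\<forall>p\<in>U. \<mu> p * pu \<mu> p - \<nu> p * pu \<nu> p = 2 * sE p * \<gamma>2 p * ((\<mu> p)\<^sup>2 - (\<nu> p)\<^sup>2)"
    by (simp add: codazzi_\<mu>u codazzi_\<nu>u algebra_simps power2_eq_square)
  have J: "\<forall>p\<in>U. \<mu> p * pv \<mu> p - \<nu> p * pv \<nu> p = 0"
    by (simp add: codazzi_\<mu>v codazzi_\<nu>v)
  note d = metric_partials[OF q] scalar_partials[OF q]
  note \<mu>2 = smooth_on2_second_partials[OF U frame_smooth(4) q]
    and \<nu>2 = smooth_on2_second_partials[OF U frame_smooth(3) q]
  note dI = has_pv_unique_on[OF U q I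
      has_pv_diff[OF has_pv_mult[OF d(6) \<mu>2(1)] has_pv_mult[OF d(8) \<nu>2(1)]]
      has_pv_mult[OF has_pv_mult[OF has_pv_mult[OF has_pv_const d(2)] d(10)]
        has_pv_diff[OF has_pv_power2[OF d(6)] has_pv_power2[OF d(8)]]]]
  note dJ = has_pu_zero_on[OF U q J has_pu_diff[OF has_pu_mult[OF d(5) \<mu>2(2)] has_pu_mult[OF d(7) \<nu>2(2)]]]
  have "(2 * sE q * ((\<mu> q)\<^sup>2 - (\<nu> q)\<^sup>2)) * pv \<gamma>2 q = 0"
    using dI dJ codazzi_\<mu>v[OF q] codazzi_\<nu>v[OF q] metric_derivatives(1)[OF q] by algebra
  then show ?thesis using metric_positive[OF q] invariants_nonzero[OF q] by simp
qed

text \<open>Differentiating the Gauss equation in v, using \<open>\<gamma>\<^sub>2\<^sub>v = 0\<close>, gives \<open>4\<surd>E\<surd>G \<mu>\<nu>\<beta>\<^sub>1 = 0\<close>.\<close>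
lemma \<beta>1_zero:
  assumes q: "q \<in> U"
  shows "\<beta>1 q = 0"
proof -
  have G: "\<forall>p\<in>U. pu \<gamma>2 p = sE p * ((\<gamma>2 p)\<^sup>2 - (\<mu> p)\<^sup>2 - (\<nu> p)\<^sup>2)"
    using gauss_equation by blast
  have Z: "\<forall>p\<in>U. pv \<gamma>2 p = 0" using \<gamma>2_v_zero by blast
  note d = metric_partials[OF q] scalar_partials[OF q]
  note \<gamma>2 = smooth_on2_second_partials[OF U frame_smooth(5) q]
  note dG = has_pv_unique_on[OF U q G \<gamma>2(1) has_pv_mult[OF d(2)
      has_pv_diff[OF has_pv_diff[OF has_pv_power2[OF d(10)] has_pv_power2[OF d(6)]] has_pv_power2[OF d(8)]]]]
  note dZ = has_pu_zero_on[OF U q Z \<gamma>2(2)]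
  have "(4 * sE q * sG q * \<mu> q * \<nu> q) * \<beta>1 q = 0"
    using dG dZ \<gamma>2_v_zero[OF q] codazzi_\<mu>v[OF q] codazzi_\<nu>v[OF q] metric_derivatives(1)[OF q] by algebra
  then show ?thesis using metric_positive[OF q] invariants_nonzero[OF q] by simp
qed

lemma \<mu>_v_zero: "q \<in> U \<Longrightarrow> pv \<mu> q = 0"
  and \<nu>_v_zero: "q \<in> U \<Longrightarrow> pv \<nu> q = 0"
  by (simp_all add: codazzi_\<mu>v codazzi_\<nu>v \<beta>1_zero)

text \<open>Differentiating \<open>\<surd>E \<mu> \<beta>\<^sub>2 = \<nu>\<^sub>u - 2\<surd>E \<gamma>\<^sub>2 \<nu>\<close> in v; \<open>\<nu>\<^sub>u\<^sub>v = \<nu>\<^sub>v\<^sub>u = 0\<close>.\<close>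
lemma \<beta>2_v_zero:
  assumes q: "q \<in> U"
  shows "pv \<beta>2 q = 0"
proof -
  have C: "\<forall>p\<in>U. sE p * \<mu> p * \<beta>2 p = pu \<nu> p - 2 * sE p * \<gamma>2 p * \<nu> p"
    by (simp add: codazzi_\<nu>u)
  have Z: "\<forall>p\<in>U. pv \<nu> p = 0" using \<nu>_v_zero by blast
  note d = metric_partials[OF q] scalar_partials[OF q]
  note \<nu>2 = smooth_on2_second_partials[OF U frame_smooth(3) q]
  note dC = has_pv_unique_on[OF U q C has_pv_mult[OF has_pv_mult[OF d(2) d(6)] d(11)]
      has_pv_diff[OF \<nu>2(1) has_pv_mult[OF has_pv_mult[OF has_pv_mult[OF has_pv_const d(2)] d(10)] d(8)]]]
  note dZ = has_pu_zero_on[OF U q Z \<nu>2(2)]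
  have "(sE q * \<mu> q) * pv \<beta>2 q = 0"
    using dC dZ \<gamma>2_v_zero[OF q] \<mu>_v_zero[OF q] \<nu>_v_zero[OF q] metric_derivatives(1)[OF q] by algebra
  then show ?thesis using metric_positive[OF q] invariants_nonzero[OF q] by simp
qed

text \<open>\<open>E = (\<surd>E)\<^sup>2\<close> and \<open>(\<surd>E)\<^sub>v = 0\<close>.\<close>
lemma E_v_zero:
  assumes q: "q \<in> U"
  shows "pv (fE z) q = 0"
proof -
  have E: "\<forall>p\<in>U. fE z p = sE p * sE p" using metric_positive by (simp add: abs_of_pos)
  have "has_pv (fE z) (pv (fE z) q) q"
    using z_partials[OF q] unfolding fE_def[abs_def] by (blast intro: has_pv_pv has_pv_inner)
  from has_pv_unique_on[OF U q E this has_pv_mult[OF metric_partials(2,2)[OF q]]]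
  show ?thesis by (simp add: metric_derivatives[OF q])
qed

text \<open>By the Codazzi equations, \<open>(\<mu>\<^sup>2 - \<nu>\<^sup>2)\<^sub>u = 4\<surd>E \<gamma>\<^sub>2 (\<mu>\<^sup>2 - \<nu>\<^sup>2)\<close>.\<close>
lemma \<gamma>2_formula:
  assumes q: "q \<in> U"
  shows "\<gamma>2 q = (1 / (4 * sE q)) * pu (\<lambda>q. ln \<bar>(\<mu> q)\<^sup>2 - (\<nu> q)\<^sup>2\<bar>) q"
proof -
  note d = scalar_partials[OF q] and L = invariants_nonzero(3)[OF q]
  have "pu (\<lambda>q. ln \<bar>(\<mu> q)\<^sup>2 - (\<nu> q)\<^sup>2\<bar>) q
      = (2 * \<mu> q * pu \<mu> q - 2 * \<nu> q * pu \<nu> q) / ((\<mu> q)\<^sup>2 - (\<nu> q)\<^sup>2)"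
    by (rule pu_eqI[OF has_pu_ln_abs[OF has_pu_diff[OF has_pu_power2[OF d(1)] has_pu_power2[OF d(3)]] L]])
  also have "\<dots> = 4 * sE q * \<gamma>2 q"
    using L by (simp add: codazzi_\<mu>u[OF q] codazzi_\<nu>u[OF q] field_simps power2_eq_square)
  finally show ?thesis using metric_positive[OF q] by simp
qed

text \<open>By the Codazzi equations, \<open>\<mu>\<nu>\<^sub>u - \<nu>\<mu>\<^sub>u = \<surd>E \<beta>\<^sub>2 (\<mu>\<^sup>2 - \<nu>\<^sup>2)\<close>.\<close>
lemma \<beta>2_formula:
  assumes q: "q \<in> U"
  shows "\<beta>2 q = (1 / sE q) * pu (\<lambda>q. ln (sqrt \<bar>(\<mu> q + \<nu> q) / (\<mu> q - \<nu> q)\<bar>)) q"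
proof -
  note d = scalar_partials[OF q]
  have cancel: "2 * c * (a * b) / b\<^sup>2 / (2 * (a / b)) = c" if "a \<noteq> 0" "b \<noteq> 0" for a b c :: real
    using that by (simp add: power2_eq_square)
  have "(\<mu> q + \<nu> q) * (\<mu> q - \<nu> q) \<noteq> 0"
    using invariants_nonzero(3)[OF q] by (simp add: power2_eq_square algebra_simps)
  then have nz: "\<mu> q + \<nu> q \<noteq> 0" "\<mu> q - \<nu> q \<noteq> 0" by auto
  then have "(\<mu> q + \<nu> q) / (\<mu> q - \<nu> q) \<noteq> 0" by simp
  from pu_eqI[OF has_pu_ln_sqrt_abs[OF has_pu_divide[OF has_pu_add[OF d(1) d(3)] has_pu_diff[OF d(1) d(3)] nz(2)] this]]
  have "pu (\<lambda>q. ln (sqrt \<bar>(\<mu> q + \<nu> q) / (\<mu> q - \<nu> q)\<bar>)) q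
      = ((pu \<mu> q + pu \<nu> q) * (\<mu> q - \<nu> q) - (\<mu> q + \<nu> q) * (pu \<mu> q - pu \<nu> q)) / (\<mu> q - \<nu> q)\<^sup>2
        / (2 * ((\<mu> q + \<nu> q) / (\<mu> q - \<nu> q)))" .
  also have "(pu \<mu> q + pu \<nu> q) * (\<mu> q - \<nu> q) - (\<mu> q + \<nu> q) * (pu \<mu> q - pu \<nu> q)
      = 2 * (sE q * \<beta>2 q) * ((\<mu> q + \<nu> q) * (\<mu> q - \<nu> q))"
    by (simp add: codazzi_\<mu>u[OF q] codazzi_\<nu>u[OF q] algebra_simps)
  also have "2 * (sE q * \<beta>2 q) * ((\<mu> q + \<nu> q) * (\<mu> q - \<nu> q)) / (\<mu> q - \<nu> q)\<^sup>2
      / (2 * ((\<mu> q + \<nu> q) / (\<mu> q - \<nu> q))) = sE q * \<beta>2 q"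
    by (rule cancel[OF nz])
  finally show ?thesis using metric_positive[OF q] by simp
qed

end

theorem mainTheorem11:
  fixes U :: "(real \<times> real) set"
    and z n1 n2 :: "real \<times> real \<Rightarrow> real^4"
    and \<nu> \<mu> \<gamma>1 \<gamma>2 \<beta>1 \<beta>2 :: "real \<times> real \<Rightarrow> real"
  assumes "open U"
    and "smooth_on2 U z"
    and "\<forall>p\<in>U. fE z p * fG z p - (fF z p)\<^sup>2 > 0"
    and "\<forall>p\<in>U. fF z p = 0"
    and "geometric_frame U z n1 n2 \<nu> \<mu> \<gamma>1 \<gamma>2 \<beta>1 \<beta>2"
    and "minimal_general_type U z n1 n2"
    and "\<forall>p\<in>U. \<gamma>1 p = 0"
  shows "\<forall>p\<in>U.
           pv (fE z) p = 0 \<and> pv \<mu> p = 0 \<and> pv \<nu> p = 0 \<and> pv \<gamma>2 p = 0 \<and> pv \<beta>2 p = 0 \<and>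
           \<beta>1 p = 0 \<and>
           \<gamma>2 p = (1 / (4 * sqrt (fE z p))) * pu (\<lambda>q. ln \<bar>(\<mu> q)\<^sup>2 - (\<nu> q)\<^sup>2\<bar>) p \<and>
           \<beta>2 p = (1 / sqrt (fE z p)) * pu (\<lambda>q. ln (sqrt \<bar>(\<mu> q + \<nu> q) / (\<mu> q - \<nu> q)\<bar>)) p"
proof -
  interpret frame_gamma1_zero U z n1 n2 \<nu> \<mu> \<gamma>1 \<gamma>2 \<beta>1 \<beta>2
    using assms by unfold_locales
  show ?thesis
    using E_v_zero \<mu>_v_zero \<nu>_v_zero \<gamma>2_v_zero \<beta>2_v_zero \<beta>1_zero \<gamma>2_formula \<beta>2_formula by blast
qed

end
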